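(* Let $n\ge2$, let $c=(c_{i,j})$ be an $n\times(n+1)$ matrix with entries in $\{0,1\}$, $\sigma_1,\ldots,\sigma_n>0$, $\gamma_1,\ldots,\gamma_{n+1}>0$. Let $\mathbf{X}=(X_1,\ldots,X_n)'$ have decumulative distribution function $\mathbf{P}[X_1>x_1,\ldots,X_n>x_n]=\prod_{j=1}^{n+1}(1+\sum_{i=1}^nc_{i,j}x_i/\sigma_i)^{-\gamma_j}$ for $(x_1,\ldots,x_n)'\in(0,\infty)^n$. For $1\le k\ne l\le n$ let $\gamma_{c,(k,l)}=\gamma_{c,(l,k)}=\sum_jc_{k,j}c_{l,j}\gamma_j$ (assumed $>0$), $\gamma_{c,k}=\sum_jc_{k,j}(1-c_{l,j})\gamma_j$ and $m(x_l)=\frac{\sigma_k}{\gamma_{c,(k,l)}}(1+x_l/\sigma_l)$. Then for $x_k,x_l>0$, \[ \mathbf{P}[X_k>x_k\mid X_l>x_l]=\left(1+\frac{x_k}{\sigma_k}\right)^{-\gamma_{c,k}}\left(1+\frac{x_k}{\gamma_{c,(k,l)}m(x_l)}\right)^{-\gamma_{c,(l,k)}}. \] *)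

theory Defs
  imports "HOL-Probability.Probability"
begin

end

theory Submission
  imports Defs
begin

text \<open>The survival function is given only on the open orthant; continuity of measure from above
  and continuity of the survival function extend it to the closed orthant. At the origin this shows
  that almost surely every X_i is positive, so the joint survival function of a subfamily is the full
  one with the remaining coordinates set to 0. In the quotient defining the conditional probability
  the j-th factor depends only on (c_kj, c_lj): it is 1 if c_kj = 0, (1 + x_k/sigma_k)^(-gamma_j) if
  c_kj = 1 and c_lj = 0, and (1 + x_k/(sigma_k (1 + x_l/sigma_l)))^(-gamma_j) if both are 1.
  Collecting exponents gives the claim, since sigma_k (1 + x_l/sigma_l) = gamma_kl m(x_l).\<close>

lemma sets_all_gt:
  fixes X :: "'i \<Rightarrow> 'a \<Rightarrow> real"
  assumes "finite I" "\<And>i. i \<in> I \<Longrightarrow> X i \<in> borel_measurable M"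
  shows "{\<omega>\<in>space M. \<forall>i\<in>I. x i < X i \<omega>} \<in> sets M"
proof (rule sets.sets_Collect_finite_All[OF _ assms(1)])
  fix i assume "i \<in> I"
  then have [measurable]: "X i \<in> borel_measurable M" by (rule assms)
  show "{\<omega>\<in>space M. x i < X i \<omega>} \<in> sets M" by measurable
qed

lemma (in finite_measure) tendsto_measure_all_gt_shift:
  fixes X :: "'i \<Rightarrow> 'a \<Rightarrow> real"
  assumes "finite I" "\<And>i. i \<in> I \<Longrightarrow> X i \<in> borel_measurable M"
  shows "(\<lambda>m. measure M {\<omega>\<in>space M. \<forall>i\<in>I. x i + inverse (Suc m) < X i \<omega>})
           \<longlonglongrightarrow> measure M {\<omega>\<in>space M. \<forall>i\<in>I. x i < X i \<omega>}"
proof -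
  define A where "A m = {\<omega>\<in>space M. \<forall>i\<in>I. x i + inverse (Suc m) < X i \<omega>}" for m
  have "range A \<subseteq> sets M"
    unfolding A_def using sets_all_gt[OF assms] by auto
  moreover have "incseq A"
  proof (rule incseq_SucI)
    fix m
    have "x i + inverse (real (Suc (Suc m))) \<le> x i + inverse (Suc m)" for i
      by (simp add: field_simps)
    then show "A m \<subseteq> A (Suc m)"
      unfolding A_def using le_less_trans by blast
  qed
  ultimately have "(\<lambda>m. measure M (A m)) \<longlonglongrightarrow> measure M (\<Union>m. A m)"
    by (rule finite_Lim_measure_incseq)
  moreover have "(\<Union>m. A m) = {\<omega>\<in>space M. \<forall>i\<in>I. x i < X i \<omega>}"
  proof (intro equalityI subsetI)
    fix \<omega> assume "\<omega> \<in> (\<Union>m. A m)"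
    then obtain m where "\<omega> \<in> A m" by blast
    moreover have "inverse (real (Suc m)) > 0" by simp
    ultimately show "\<omega> \<in> {\<omega>\<in>space M. \<forall>i\<in>I. x i < X i \<omega>}"
      unfolding A_def by (auto intro: less_trans[rotated])
  next
    fix \<omega> assume \<omega>: "\<omega> \<in> {\<omega>\<in>space M. \<forall>i\<in>I. x i < X i \<omega>}"
    have "eventually (\<lambda>m. inverse (real (Suc m)) < X i \<omega> - x i) sequentially" if "i \<in> I" for i
      by (rule order_tendstoD(2)[OF LIMSEQ_inverse_real_of_nat]) (use \<omega> that in simp)
    then have "eventually (\<lambda>m. \<forall>i\<in>I. inverse (real (Suc m)) < X i \<omega> - x i) sequentially"
      using assms(1) by (simp add: eventually_ball_finite)
    then obtain m where "\<forall>i\<in>I. inverse (real (Suc m)) < X i \<omega> - x i"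
      by (auto simp: eventually_sequentially)
    with \<omega> have "\<omega> \<in> A m"
      unfolding A_def by (simp add: algebra_simps)
    then show "\<omega> \<in> (\<Union>m. A m)" by blast
  qed
  ultimately show ?thesis
    unfolding A_def by simp
qed

lemma (in finite_measure) measure_all_gt_extend_to_nonneg:
  fixes X :: "'i \<Rightarrow> 'a \<Rightarrow> real"
  assumes "finite I" "\<And>i. i \<in> I \<Longrightarrow> X i \<in> borel_measurable M"
    and surv: "\<And>y. (\<forall>i\<in>I. y i > 0) \<Longrightarrow> measure M {\<omega>\<in>space M. \<forall>i\<in>I. y i < X i \<omega>} = F y"
    and F_cont: "(\<lambda>m. F (\<lambda>i. x i + inverse (Suc m))) \<longlonglongrightarrow> F x"
    and x_nonneg: "\<And>i. i \<in> I \<Longrightarrow> x i \<ge> 0"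
  shows "measure M {\<omega>\<in>space M. \<forall>i\<in>I. x i < X i \<omega>} = F x"
proof -
  have shifted: "measure M {\<omega>\<in>space M. \<forall>i\<in>I. x i + inverse (Suc m) < X i \<omega>}
                   = F (\<lambda>i. x i + inverse (Suc m))" for m
    using surv[of "\<lambda>i. x i + inverse (Suc m)"] x_nonneg
    by (simp add: add_nonneg_pos del: of_nat_Suc)
  have "(\<lambda>m. measure M {\<omega>\<in>space M. \<forall>i\<in>I. x i + inverse (Suc m) < X i \<omega>})
          \<longlonglongrightarrow> measure M {\<omega>\<in>space M. \<forall>i\<in>I. x i < X i \<omega>}"
    by (rule tendsto_measure_all_gt_shift[OF assms(1)]) (rule assms(2))
  then have "(\<lambda>m. F (\<lambda>i. x i + inverse (Suc m))) \<longlonglongrightarrow> measure M {\<omega>\<in>space M. \<forall>i\<in>I. x i < X i \<omega>}"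
    by (simp only: shifted)
  then show ?thesis
    using F_cont by (rule LIMSEQ_unique)
qed

lemma (in finite_measure) measure_all_gt_eq_AE_pos:
  fixes X :: "'i \<Rightarrow> 'a \<Rightarrow> real"
  assumes "finite I" "J \<subseteq> I" "\<And>i. i \<in> I \<Longrightarrow> X i \<in> borel_measurable M"
    and pos: "AE \<omega> in M. \<forall>i\<in>I. 0 < X i \<omega>"
    and "\<And>i. i \<in> I - J \<Longrightarrow> x i = 0"
  shows "measure M {\<omega>\<in>space M. \<forall>i\<in>J. x i < X i \<omega>} = measure M {\<omega>\<in>space M. \<forall>i\<in>I. x i < X i \<omega>}"
proof (rule finite_measure_eq_AE)
  show "AE \<omega> in M. (\<omega> \<in> {\<omega>\<in>space M. \<forall>i\<in>J. x i < X i \<omega>}) = (\<omega> \<in> {\<omega>\<in>space M. \<forall>i\<in>I. x i < X i \<omega>})"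
    using pos
  proof eventually_elim
    case (elim \<omega>)
    then have "\<forall>i\<in>I - J. x i < X i \<omega>"
      using assms(5) by simp
    then show ?case
      using assms(2) by blast
  qed
next
  show "{\<omega>\<in>space M. \<forall>i\<in>J. x i < X i \<omega>} \<in> sets M"
    using assms(1-3) by (intro sets_all_gt) (auto intro: finite_subset)
  show "{\<omega>\<in>space M. \<forall>i\<in>I. x i < X i \<omega>} \<in> sets M"
    using assms(1,3) by (intro sets_all_gt)
qed

definition pareto_surv ::
    "nat \<Rightarrow> (nat \<Rightarrow> nat \<Rightarrow> real) \<Rightarrow> (nat \<Rightarrow> real) \<Rightarrow> (nat \<Rightarrow> real) \<Rightarrow> (nat \<Rightarrow> real) \<Rightarrow> real" where
  "pareto_surv n c \<sigma> \<gamma> x = (\<Prod>j\<in>{1..n+1}. (1 + (\<Sum>i\<in>{1..n}. c i j * x i / \<sigma> i)) powr (- \<gamma> j))"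

lemma tendsto_pareto_surv:
  assumes "\<And>i. i \<in> {1..n} \<Longrightarrow> \<sigma> i > 0"
    and "\<And>i j. i \<in> {1..n} \<Longrightarrow> j \<in> {1..n+1} \<Longrightarrow> c i j \<ge> 0"
    and "\<And>i. i \<in> {1..n} \<Longrightarrow> x i \<ge> 0"
    and "\<And>i. i \<in> {1..n} \<Longrightarrow> (\<lambda>m. y m i) \<longlonglongrightarrow> x i"
  shows "(\<lambda>m. pareto_surv n c \<sigma> \<gamma> (y m)) \<longlonglongrightarrow> pareto_surv n c \<sigma> \<gamma> x"
  unfolding pareto_surv_def
proof (intro tendsto_prod tendsto_powr tendsto_add tendsto_sum tendsto_const tendsto_divide tendsto_mult)
  fix i assume "i \<in> {1..n}"
  then show "(\<lambda>m. y m i) \<longlonglongrightarrow> x i" "\<sigma> i \<noteq> 0"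
    using assms(1,4) by force+
next
  fix j assume j: "j \<in> {1..n+1}"
  have "(\<Sum>i\<in>{1..n}. c i j * x i / \<sigma> i) \<ge> 0"
    using assms(1-3) j by (intro sum_nonneg) (simp add: less_imp_le)
  then show "1 + (\<Sum>i\<in>{1..n}. c i j * x i / \<sigma> i) \<noteq> 0" by linarith
qed

lemma binary_factor_ratio:
  fixes a b g ck cl :: real
  assumes "ck \<in> {0, 1}" "cl \<in> {0, 1}" "a \<ge> 0" "b \<ge> 0"
  shows "(1 + (ck * a + cl * b)) powr (- g) / (1 + cl * b) powr (- g)
           = (1 + a) powr (- (ck * (1 - cl) * g)) * (1 + a / (1 + b)) powr (- (cl * ck * g))"
proof -
  have "(1 + (a + b)) / (1 + b) = 1 + a / (1 + b)"
    using \<open>b \<ge> 0\<close> by (simp add: field_simps)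
  then have "(1 + (a + b)) powr (- g) / (1 + b) powr (- g) = (1 + a / (1 + b)) powr (- g)"
    using assms(3,4) by (simp add: powr_divide[symmetric])
  then show ?thesis
    using assms by auto
qed

lemma pareto_surv_two_point_ratio:
  fixes k l :: nat
  assumes "k \<in> {1..n}" "l \<in> {1..n}" "k \<noteq> l"
    and c01: "\<And>i j. i \<in> {1..n} \<Longrightarrow> j \<in> {1..n+1} \<Longrightarrow> c i j \<in> {0, 1}"
    and "\<sigma> k > 0" "\<sigma> l > 0" "xk \<ge> 0" "xl \<ge> 0"
  shows "pareto_surv n c \<sigma> \<gamma> ((\<lambda>_. 0)(k := xk, l := xl)) / pareto_surv n c \<sigma> \<gamma> ((\<lambda>_. 0)(l := xl))
       = (1 + xk / \<sigma> k) powr (- (\<Sum>j\<in>{1..n+1}. c k j * (1 - c l j) * \<gamma> j))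
         * (1 + xk / (\<sigma> k * (1 + xl / \<sigma> l))) powr (- (\<Sum>j\<in>{1..n+1}. c l j * c k j * \<gamma> j))"
proof -
  define a where "a = 1 + xk / \<sigma> k"
  define b where "b = 1 + xk / (\<sigma> k * (1 + xl / \<sigma> l))"
  have "a > 0" "b > 0"
    unfolding a_def b_def using assms(5-8) by (simp_all add: add_pos_nonneg)
  have ratios_nonneg: "xk / \<sigma> k \<ge> 0" "xl / \<sigma> l \<ge> 0"
    using assms(5-8) by simp_all
  have sum_two: "(\<Sum>i\<in>{1..n}. c i j * ((\<lambda>_. 0)(k := xk, l := xl)) i / \<sigma> i)
                   = c k j * xk / \<sigma> k + c l j * xl / \<sigma> l" for j
  proof -
    have "c i j * ((\<lambda>_. 0)(k := xk, l := xl)) i / \<sigma> i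
        = (if i = k then c k j * (xk / \<sigma> k) else 0) + (if i = l then c l j * (xl / \<sigma> l) else 0)" for i
      using \<open>k \<noteq> l\<close> by auto
    then show ?thesis
      using assms(1,2) by (simp add: sum.distrib)
  qed
  have sum_one: "(\<Sum>i\<in>{1..n}. c i j * ((\<lambda>_. 0)(l := xl)) i / \<sigma> i) = c l j * xl / \<sigma> l" for j
  proof -
    have "c i j * ((\<lambda>_. 0)(l := xl)) i / \<sigma> i = (if i = l then c l j * (xl / \<sigma> l) else 0)" for i
      by simp
    then show ?thesis
      using assms(2) by simp
  qed
  have factor: "(1 + (c k j * xk / \<sigma> k + c l j * xl / \<sigma> l)) powr (- \<gamma> j) / (1 + c l j * xl / \<sigma> l) powr (- \<gamma> j)
              = a powr (- (c k j * (1 - c l j) * \<gamma> j)) * b powr (- (c l j * c k j * \<gamma> j))"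
    if "j \<in> {1..n+1}" for j
    using binary_factor_ratio[OF c01[OF assms(1) that] c01[OF assms(2) that] ratios_nonneg, of "\<gamma> j"]
    unfolding a_def b_def by simp
  have "pareto_surv n c \<sigma> \<gamma> ((\<lambda>_. 0)(k := xk, l := xl)) / pareto_surv n c \<sigma> \<gamma> ((\<lambda>_. 0)(l := xl))
      = (\<Prod>j\<in>{1..n+1}. a powr (- (c k j * (1 - c l j) * \<gamma> j)) * b powr (- (c l j * c k j * \<gamma> j)))"
    unfolding pareto_surv_def sum_two sum_one prod_dividef[symmetric]
    by (rule prod.cong) (simp_all add: factor)
  also have "\<dots> = a powr (\<Sum>j\<in>{1..n+1}. - (c k j * (1 - c l j) * \<gamma> j))
                 * b powr (\<Sum>j\<in>{1..n+1}. - (c l j * c k j * \<gamma> j))"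
    using \<open>a > 0\<close> \<open>b > 0\<close> by (simp only: prod.distrib powr_sum less_irrefl not_False_eq_True)
  also have "\<dots> = a powr (- (\<Sum>j\<in>{1..n+1}. c k j * (1 - c l j) * \<gamma> j))
                 * b powr (- (\<Sum>j\<in>{1..n+1}. c l j * c k j * \<gamma> j))"
    by (simp only: sum_negf)
  finally show ?thesis
    unfolding a_def b_def .
qed

locale pareto_survival = prob_space +
  fixes n :: nat and c :: "nat \<Rightarrow> nat \<Rightarrow> real" and \<sigma> \<gamma> :: "nat \<Rightarrow> real"
    and X :: "nat \<Rightarrow> 'a \<Rightarrow> real"
  assumes c01: "\<And>i j. i \<in> {1..n} \<Longrightarrow> j \<in> {1..n+1} \<Longrightarrow> c i j \<in> {0, 1}"
    and \<sigma>_pos: "\<And>i. i \<in> {1..n} \<Longrightarrow> \<sigma> i > 0"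
    and rv: "\<And>i. i \<in> {1..n} \<Longrightarrow> X i \<in> borel_measurable M"
    and surv_pos: "\<And>x. (\<forall>i\<in>{1..n}. x i > 0) \<Longrightarrow>
        \<P>(\<omega> in M. \<forall>i\<in>{1..n}. x i < X i \<omega>) = pareto_surv n c \<sigma> \<gamma> x"
begin

lemma surv_nonneg:
  assumes x_nonneg: "\<And>i. i \<in> {1..n} \<Longrightarrow> x i \<ge> 0"
  shows "\<P>(\<omega> in M. \<forall>i\<in>{1..n}. x i < X i \<omega>) = pareto_surv n c \<sigma> \<gamma> x"
proof (rule measure_all_gt_extend_to_nonneg[where F="pareto_surv n c \<sigma> \<gamma>"])
  have "(\<lambda>m. x i + inverse (Suc m)) \<longlonglongrightarrow> x i" for i
    using tendsto_add[OF tendsto_const LIMSEQ_inverse_real_of_nat] by simp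
  then show "(\<lambda>m. pareto_surv n c \<sigma> \<gamma> (\<lambda>i. x i + inverse (Suc m))) \<longlonglongrightarrow> pareto_surv n c \<sigma> \<gamma> x"
    using c01 \<sigma>_pos x_nonneg by (intro tendsto_pareto_surv) force+
qed (use rv x_nonneg surv_pos in auto)

lemma AE_all_pos: "AE \<omega> in M. \<forall>i\<in>{1..n}. 0 < X i \<omega>"
proof -
  have "\<P>(\<omega> in M. \<forall>i\<in>{1..n}. 0 < X i \<omega>) = 1"
    using surv_nonneg[of "\<lambda>_. 0"] by (simp add: pareto_surv_def)
  then have "AE \<omega> in M. \<omega> \<in> {\<omega>\<in>space M. \<forall>i\<in>{1..n}. 0 < X i \<omega>}"
    by (rule AE_prob_1)
  then show ?thesis
    by eventually_elim simp
qed

lemma surv_subfamily: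
  assumes "J \<subseteq> {1..n}" "\<And>i. i \<in> J \<Longrightarrow> x i \<ge> 0" "\<And>i. i \<in> {1..n} - J \<Longrightarrow> x i = 0"
  shows "\<P>(\<omega> in M. \<forall>i\<in>J. x i < X i \<omega>) = pareto_surv n c \<sigma> \<gamma> x"
proof -
  have "\<P>(\<omega> in M. \<forall>i\<in>J. x i < X i \<omega>) = \<P>(\<omega> in M. \<forall>i\<in>{1..n}. x i < X i \<omega>)"
    using assms(1,3) by (intro measure_all_gt_eq_AE_pos[OF _ _ rv AE_all_pos]) auto
  also have "\<dots> = pareto_surv n c \<sigma> \<gamma> x"
    using assms(2,3) by (intro surv_nonneg) (metis Diff_iff order_refl)
  finally show ?thesis .
qed

lemma cond_prob_pair:
  assumes "k \<in> {1..n}" "l \<in> {1..n}" "k \<noteq> l" "xk \<ge> 0" "xl \<ge> 0"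
  shows "\<P>(\<omega> in M. X k \<omega> > xk \<bar> X l \<omega> > xl)
       = (1 + xk / \<sigma> k) powr (- (\<Sum>j\<in>{1..n+1}. c k j * (1 - c l j) * \<gamma> j))
         * (1 + xk / (\<sigma> k * (1 + xl / \<sigma> l))) powr (- (\<Sum>j\<in>{1..n+1}. c l j * c k j * \<gamma> j))"
proof -
  have "\<P>(\<omega> in M. X k \<omega> > xk \<and> X l \<omega> > xl)
      = \<P>(\<omega> in M. \<forall>i\<in>{k, l}. ((\<lambda>_. 0)(k := xk, l := xl)) i < X i \<omega>)"
    using \<open>k \<noteq> l\<close> by simp
  also have "\<dots> = pareto_surv n c \<sigma> \<gamma> ((\<lambda>_. 0)(k := xk, l := xl))"
    using assms by (intro surv_subfamily) auto
  finally have joint: "\<P>(\<omega> in M. X k \<omega> > xk \<and> X l \<omega> > xl) = \<dots>" .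
  have "\<P>(\<omega> in M. X l \<omega> > xl) = \<P>(\<omega> in M. \<forall>i\<in>{l}. ((\<lambda>_. 0)(l := xl)) i < X i \<omega>)"
    by simp
  also have "\<dots> = pareto_surv n c \<sigma> \<gamma> ((\<lambda>_. 0)(l := xl))"
    using assms by (intro surv_subfamily) auto
  finally have single: "\<P>(\<omega> in M. X l \<omega> > xl) = \<dots>" .
  show ?thesis
    unfolding cond_prob_def joint single
    using assms by (intro pareto_surv_two_point_ratio c01 \<sigma>_pos)
qed

end

theorem proposition4p4:
  fixes M :: "'a measure" and n :: nat
    and c :: "nat \<Rightarrow> nat \<Rightarrow> real"
    and \<sigma> :: "nat \<Rightarrow> real" and \<gamma> :: "nat \<Rightarrow> real"
    and X :: "nat \<Rightarrow> 'a \<Rightarrow> real"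
    and k l :: nat and xk xl :: real
  assumes "prob_space M"
    and "n \<ge> 2"
    and c01: "\<And>i j. i \<in> {1..n} \<Longrightarrow> j \<in> {1..n+1} \<Longrightarrow> c i j \<in> {0, 1}"
    and "\<And>i. i \<in> {1..n} \<Longrightarrow> \<sigma> i > 0"
    and "\<And>j. j \<in> {1..n+1} \<Longrightarrow> \<gamma> j > 0"
    and rv: "\<And>i. i \<in> {1..n} \<Longrightarrow> X i \<in> borel_measurable M"
    and surv: "\<And>x :: nat \<Rightarrow> real. (\<forall>i\<in>{1..n}. x i > 0) \<Longrightarrow>
        \<P>(\<omega> in M. \<forall>i\<in>{1..n}. X i \<omega> > x i)
          = (\<Prod>j\<in>{1..n+1}. (1 + (\<Sum>i\<in>{1..n}. c i j * x i / \<sigma> i)) powr (- \<gamma> j))"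
    and "k \<in> {1..n}" and "l \<in> {1..n}" and "k \<noteq> l"
    and gkl_pos: "(\<Sum>j\<in>{1..n+1}. c k j * c l j * \<gamma> j) > 0"
    and "xk > 0" and "xl > 0"
  shows "(let \<gamma>kl = (\<Sum>j\<in>{1..n+1}. c k j * c l j * \<gamma> j);
              \<gamma>lk = (\<Sum>j\<in>{1..n+1}. c l j * c k j * \<gamma> j);
              \<gamma>k = (\<Sum>j\<in>{1..n+1}. c k j * (1 - c l j) * \<gamma> j);
              m = (\<lambda>t. \<sigma> k / \<gamma>kl * (1 + t / \<sigma> l))
          in \<P>(\<omega> in M. X k \<omega> > xk \<bar> X l \<omega> > xl)
             = (1 + xk / \<sigma> k) powr (- \<gamma>k)
               * (1 + xk / (\<gamma>kl * m xl)) powr (- \<gamma>lk))"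
proof -
  interpret pareto_survival M n c \<sigma> \<gamma> X
  proof (rule pareto_survival.intro[OF assms(1)], unfold_locales)
    show "\<P>(\<omega> in M. \<forall>i\<in>{1..n}. x i < X i \<omega>) = pareto_surv n c \<sigma> \<gamma> x"
      if "\<forall>i\<in>{1..n}. 0 < x i" for x
      using surv[OF that] unfolding pareto_surv_def .
  qed (fact c01 assms(4) rv)+
  have "(\<Sum>j\<in>{1..n+1}. c k j * c l j * \<gamma> j) * (\<sigma> k / (\<Sum>j\<in>{1..n+1}. c k j * c l j * \<gamma> j) * (1 + xl / \<sigma> l))
      = \<sigma> k * (1 + xl / \<sigma> l)"
    using gkl_pos by simp
  then show ?thesis
    using cond_prob_pair[OF assms(8-10)] \<open>xk > 0\<close> \<open>xl > 0\<close> by (simp add: Let_def)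
qed

end
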